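(* Let $A$ be a unital $C^*$-algebra and $a\in A$. (i) If $\rho(a^*,a)=0$, then $\sigma(a)\subset\mathbb R$. (ii) If $a$ is invertible and $\rho(a^*,a^{-1})=0$, then $\sigma(a)\subseteq\{\lambda\in\mathbb C:|\lambda|=1\}$.
   Context: For $a,b\in A$ and $n\geq 0$ put $C_{a,b}^n\mathbf 1=\sum_{k=0}^n(-1)^k\binom{n}{k}a^{n-k}b^k$ (with $a^0=b^0=\mathbf 1$), and $\rho(a,b)=\limsup_{n\to\infty}\|C_{a,b}^n\mathbf 1\|^{1/n}$. *)

theory Defs
  imports Complex_Main "HOL-Library.Liminf_Limsup" "HOL-Library.Extended_Real"
begin

class scaleC =
  fixes scaleC :: "complex \<Rightarrow> 'a \<Rightarrow> 'a" (infixr "*\<^sub>C" 75)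

class complex_banach_algebra_1 = scaleC + real_normed_algebra_1 + banach +
  assumes scaleC_add_right: "c *\<^sub>C (x + y) = c *\<^sub>C x + c *\<^sub>C y"
    and scaleC_add_left: "(b + c) *\<^sub>C x = b *\<^sub>C x + c *\<^sub>C x"
    and scaleC_scaleC: "b *\<^sub>C (c *\<^sub>C x) = (b * c) *\<^sub>C x"
    and scaleC_one: "(1::complex) *\<^sub>C x = x"
    and scaleR_scaleC: "r *\<^sub>R x = complex_of_real r *\<^sub>C x"
    and norm_scaleC: "norm (c *\<^sub>C x) = cmod c * norm x"
    and mult_scaleC_left: "(c *\<^sub>C x) * y = c *\<^sub>C (x * y)"
    and mult_scaleC_right: "x * (c *\<^sub>C y) = c *\<^sub>C (x * y)"

class cstar_algebra = complex_banach_algebra_1 +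
  fixes adj :: "'a \<Rightarrow> 'a"
  assumes adj_adj: "adj (adj x) = x"
    and adj_add: "adj (x + y) = adj x + adj y"
    and adj_mult: "adj (x * y) = adj y * adj x"
    and adj_scaleC: "adj (c *\<^sub>C x) = cnj c *\<^sub>C adj x"
    and cstar_identity: "norm (adj x * x) = (norm x)^2"

definition alg_invertible :: "'a::ring_1 \<Rightarrow> bool" where
  "alg_invertible x \<longleftrightarrow> (\<exists>y. x * y = 1 \<and> y * x = 1)"

definition alg_inv :: "'a::ring_1 \<Rightarrow> 'a" where
  "alg_inv x = (THE y. x * y = 1 \<and> y * x = 1)"

definition spectrum :: "'a::complex_banach_algebra_1 \<Rightarrow> complex set" where
  "spectrum a = {z. \<not> alg_invertible (z *\<^sub>C 1 - a)}"

definition Cpow1 :: "'a::ring_1 \<Rightarrow> 'a \<Rightarrow> nat \<Rightarrow> 'a" where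
  "Cpow1 a b n = (\<Sum>k\<le>n. (-1)^k * of_nat (n choose k) * a^(n-k) * b^k)"

definition rho :: "'a::real_normed_algebra_1 \<Rightarrow> 'a \<Rightarrow> ereal" where
  "rho a b = limsup (\<lambda>n. ereal (root n (norm (Cpow1 a b n))))"

end

theory Submission
  imports Defs "HOL-Analysis.Analysis"
begin

text \<open>
  If \<open>a z \<approx> \<mu> z\<close> and \<open>q z \<approx> \<nu> z\<close> for the same unit vectors z, then
  \<open>z\<^sup>* a\<^sup>* \<approx> cnj \<mu> z\<^sup>*\<close>, and sandwiching \<open>C\<^sup>n 1\<close> (for the pair \<open>a\<^sup>*, q\<close>) between
  \<open>z\<^sup>*\<close> and z gives \<open>\<parallel>C\<^sup>n 1\<parallel> \<ge> \<bar>cnj \<mu> - \<nu>\<bar>\<^sup>n \<parallel>z\<^sup>* z\<parallel> = \<bar>cnj \<mu> - \<nu>\<bar>\<^sup>n\<close>, so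
  \<open>\<bar>cnj \<mu> - \<nu>\<bar> \<le> \<rho>(a\<^sup>*, q)\<close>. Taking q = a, \<nu> = \<mu> shows that \<open>\<rho>(a\<^sup>*, a) = 0\<close> makes
  every approximate eigenvalue real; taking \<open>q = a\<inverse>\<close>, \<open>\<nu> = \<mu>\<inverse>\<close> (the same z works)
  shows that \<open>\<rho>(a\<^sup>*, a\<inverse>) = 0\<close> forces \<open>cnj \<mu> = \<mu>\<inverse>\<close>, i.e. \<open>\<bar>\<mu>\<bar> = 1\<close>.
  Boundary points of the closed set \<open>\<sigma>(a)\<close> are approximate eigenvalues, and a segment from a
  point of \<open>\<sigma>(a)\<close> off the real line (off the unit circle) to a suitable point of the resolvent
  set meets the boundary of \<open>\<sigma>(a)\<close> at a point that is still off the line (off the circle).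
\<close>

lemma scaleC_zero_right [simp]: "c *\<^sub>C (0::'a::complex_banach_algebra_1) = 0"
proof -
  have "c *\<^sub>C (0::'a) = c *\<^sub>C 0 + c *\<^sub>C 0" using scaleC_add_right[of c "0::'a" 0] by simp
  then show ?thesis by simp
qed

lemma scaleC_zero_left [simp]: "0 *\<^sub>C (x::'a::complex_banach_algebra_1) = 0"
proof -
  have "0 *\<^sub>C x = 0 *\<^sub>C x + 0 *\<^sub>C x" using scaleC_add_left[of 0 0 x] by simp
  then show ?thesis by simp
qed

lemma scaleC_minus_right: "c *\<^sub>C (- x) = - (c *\<^sub>C (x::'a::complex_banach_algebra_1))"
proof -
  have "c *\<^sub>C (- x) + c *\<^sub>C x = 0" using scaleC_add_right[of c "- x" x] by simp
  then show ?thesis by (simp add: eq_neg_iff_add_eq_0)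
qed

lemma scaleC_diff_right: "c *\<^sub>C (x - y) = c *\<^sub>C x - c *\<^sub>C (y::'a::complex_banach_algebra_1)"
  by (simp only: diff_conv_add_uminus scaleC_add_right scaleC_minus_right)

lemma scaleC_minus_left: "(- c) *\<^sub>C x = - (c *\<^sub>C (x::'a::complex_banach_algebra_1))"
proof -
  have "(- c) *\<^sub>C x + c *\<^sub>C x = 0" using scaleC_add_left[of "- c" c x] by simp
  then show ?thesis by (simp add: eq_neg_iff_add_eq_0)
qed

lemma scaleC_diff_left: "(b - c) *\<^sub>C x = b *\<^sub>C x - c *\<^sub>C (x::'a::complex_banach_algebra_1)"
  using scaleC_add_left[of b "- c" x] scaleC_minus_left[of c x] by simp

lemma scaleC_sum_left: "sum f A *\<^sub>C (x::'a::complex_banach_algebra_1) = (\<Sum>i\<in>A. f i *\<^sub>C x)"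
  by (induction A rule: infinite_finite_induct) (auto simp: scaleC_add_left)

lemma of_real_mult_eq_scaleC: "of_real r * (x::'a::complex_banach_algebra_1) = complex_of_real r *\<^sub>C x"
  by (simp add: of_real_def mult_scaleC_left scaleR_scaleC)

lemma alg_invertibleI: "x * y = 1 \<Longrightarrow> y * x = 1 \<Longrightarrow> alg_invertible x"
  unfolding alg_invertible_def by blast

lemma alg_invertible_mult:
  fixes x y :: "'a::ring_1"
  assumes "alg_invertible x" "alg_invertible y"
  shows "alg_invertible (x * y)"
proof -
  obtain x' where x: "x * x' = 1" "x' * x = 1" using assms(1) unfolding alg_invertible_def by blast
  obtain y' where y: "y * y' = 1" "y' * y = 1" using assms(2) unfolding alg_invertible_def by blast
  have "x * y * (y' * x') = x * (y * y') * x'" "y' * x' * (x * y) = y' * (x' * x) * y"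
    by (simp_all add: mult.assoc)
  then show ?thesis using x y by (intro alg_invertibleI) simp_all
qed

lemma alg_invertible_uminus: "alg_invertible (x::'a::ring_1) \<Longrightarrow> alg_invertible (- x)"
  unfolding alg_invertible_def by (metis minus_mult_minus)

lemma alg_inv:
  fixes a :: "'a::ring_1"
  assumes "alg_invertible a"
  shows "a * alg_inv a = 1 \<and> alg_inv a * a = 1"
  unfolding alg_inv_def
proof (rule theI')
  obtain y where y: "a * y = 1" "y * a = 1" using assms unfolding alg_invertible_def by blast
  have "y' = y" if "y' * a = 1" for y'
  proof -
    have "y' = y' * (a * y)" using y by simp
    also have "\<dots> = y" by (simp only: mult.assoc[symmetric] that mult_1_left)
    finally show ?thesis .
  qed
  then show "\<exists>!y. a * y = 1 \<and> y * a = 1" using y by blast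
qed

lemma alg_invertible_one_minus:
  fixes w :: "'a::complex_banach_algebra_1"
  assumes "norm w < 1"
  shows "alg_invertible (1 - w)"
proof -
  have summable: "summable (\<lambda>n. w ^ n)"
    by (rule summable_comparison_test[of _ "\<lambda>n. norm w ^ n"])
       (auto intro!: summable_geometric norm_power_ineq simp: assms)
  have telescope: "(\<lambda>n. w ^ n - w ^ Suc n) sums 1"
    using telescope_sums[OF tendsto_minus[OF summable_LIMSEQ_zero[OF summable]]] by simp
  have "(1 - w) * (\<Sum>n. w ^ n) = (\<Sum>n. (1 - w) * w ^ n)"
    by (rule suminf_mult[OF summable, symmetric])
  also have "\<dots> = (\<Sum>n. w ^ n - w ^ Suc n)" by (simp add: algebra_simps)
  finally have "(1 - w) * (\<Sum>n. w ^ n) = (\<Sum>n. w ^ n - w ^ Suc n)" .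
  moreover have "(\<Sum>n. w ^ n) * (1 - w) = (\<Sum>n. w ^ n * (1 - w))"
    by (rule suminf_mult2[OF summable])
  then have "(\<Sum>n. w ^ n) * (1 - w) = (\<Sum>n. w ^ n - w ^ Suc n)"
    by (simp add: algebra_simps power_commutes)
  ultimately show ?thesis
    using sums_unique[OF telescope] by (intro alg_invertibleI) simp_all
qed

lemma one_le_norm_inverse_mult_dist:
  fixes x y y' :: "'a::complex_banach_algebra_1"
  assumes "\<not> alg_invertible x" and y: "y * y' = 1" "y' * y = 1"
  shows "1 \<le> norm y' * norm (x - y)"
proof (rule ccontr)
  assume "\<not> 1 \<le> norm y' * norm (x - y)"
  moreover have "norm (y' * (y - x)) \<le> norm y' * norm (x - y)"
    using norm_mult_ineq[of y' "y - x"] by (simp add: norm_minus_commute)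
  ultimately have "alg_invertible (1 - y' * (y - x))"
    by (intro alg_invertible_one_minus) simp
  moreover have "1 - y' * (y - x) = y' * x" by (simp add: algebra_simps y)
  moreover have "alg_invertible y" using y by (rule alg_invertibleI)
  ultimately have "alg_invertible (y * (y' * x))" by (simp add: alg_invertible_mult)
  then show False using assms(1) by (simp add: mult.assoc[symmetric] y)
qed

lemma exists_approx_zero_divisor:
  fixes x y y' :: "'a::complex_banach_algebra_1"
  assumes x: "\<not> alg_invertible x" and y: "y * y' = 1" "y' * y = 1"
  shows "\<exists>z. norm z = 1 \<and> norm (x * z) \<le> 2 * norm (x - y)"
proof -
  have big: "1 \<le> norm y' * norm (x - y)" by (rule one_le_norm_inverse_mult_dist[OF x y])
  then have pos: "0 < norm y'" by (cases "y' = 0") auto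
  define z where "z = (1 / norm y') *\<^sub>R y'"
  have "norm (x * z) \<le> norm ((x - y) * z) + norm (y * z)"
    by (metis diff_add_cancel left_diff_distrib norm_triangle_ineq)
  also have "\<dots> \<le> norm (x - y) + 1 / norm y'"
    using norm_mult_ineq[of "x - y" z] pos by (simp add: z_def y)
  also have "1 / norm y' \<le> norm (x - y)" using big pos by (simp add: field_simps)
  finally show ?thesis using pos by (intro exI[of _ z]) (simp add: z_def)
qed

lemma diff_resolvent_eq: "(\<mu> *\<^sub>C 1 - a) - (\<nu> *\<^sub>C 1 - a) = (\<mu> - \<nu>) *\<^sub>C (1::'a::complex_banach_algebra_1)"
  by (simp add: scaleC_diff_left)

lemma cmod_le_norm_if_in_spectrum:
  fixes a :: "'a::complex_banach_algebra_1"
  assumes "\<mu> \<in> spectrum a"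
  shows "cmod \<mu> \<le> norm a"
proof (cases "\<mu> = 0")
  case False
  have "1 \<le> norm (inverse \<mu> *\<^sub>C (1::'a)) * norm ((\<mu> *\<^sub>C 1 - a) - \<mu> *\<^sub>C 1)"
    using assms False unfolding spectrum_def
    by (intro one_le_norm_inverse_mult_dist) (simp_all add: mult_scaleC_left scaleC_scaleC scaleC_one)
  then show ?thesis using False by (simp add: norm_scaleC norm_divide field_simps)
qed simp

lemma zero_notin_spectrum: "alg_invertible a \<Longrightarrow> 0 \<notin> spectrum a"
  unfolding spectrum_def by (simp add: alg_invertible_uminus)

lemma closed_spectrum: "closed (spectrum (a::'a::complex_banach_algebra_1))"
  unfolding closed_def open_contains_ball
proof (intro ballI)
  fix \<nu> assume "\<nu> \<in> - spectrum a"
  then obtain y' where y: "(\<nu> *\<^sub>C 1 - a) * y' = 1" "y' * (\<nu> *\<^sub>C 1 - a) = 1"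
    unfolding spectrum_def alg_invertible_def by blast
  then have pos: "0 < norm y'" by (cases "y' = 0") auto
  have "\<mu> \<notin> spectrum a" if "dist \<nu> \<mu> < 1 / norm y'" for \<mu>
  proof
    assume "\<mu> \<in> spectrum a"
    then have "1 \<le> norm y' * norm ((\<mu> *\<^sub>C 1 - a) - (\<nu> *\<^sub>C 1 - a))"
      by (intro one_le_norm_inverse_mult_dist[OF _ y]) (simp add: spectrum_def)
    then have "1 \<le> norm y' * cmod (\<mu> - \<nu>)"
      by (simp only: diff_resolvent_eq norm_scaleC norm_one mult_1_right)
    moreover have "norm y' * cmod (\<mu> - \<nu>) < 1"
      using that pos by (simp add: dist_commute dist_norm field_simps)
    ultimately show False by simp
  qed
  then show "\<exists>e>0. ball \<nu> e \<subseteq> - spectrum a" using pos by (intro exI[of _ "1 / norm y'"]) auto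
qed

definition approx_eigenvalue :: "'a::complex_banach_algebra_1 \<Rightarrow> complex \<Rightarrow> bool" where
  "approx_eigenvalue a \<mu> \<longleftrightarrow> (\<forall>\<delta>>0. \<exists>z. norm z = 1 \<and> norm (a * z - \<mu> *\<^sub>C z) \<le> \<delta>)"

lemma approx_eigenvalue_if_frontier_spectrum:
  fixes a :: "'a::complex_banach_algebra_1"
  assumes \<mu>: "\<mu> \<in> frontier (spectrum a)"
  shows "approx_eigenvalue a \<mu>"
  unfolding approx_eigenvalue_def
proof (intro allI impI)
  fix \<delta> :: real assume "0 < \<delta>"
  moreover have "\<mu> \<notin> interior (spectrum a)" using \<mu> by (simp add: frontier_def)
  ultimately have "\<not> ball \<mu> (\<delta> / 2) \<subseteq> spectrum a"
    by (meson half_gt_zero mem_interior)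
  then obtain \<nu> where \<nu>: "\<nu> \<in> ball \<mu> (\<delta> / 2)" "\<nu> \<notin> spectrum a" by blast
  then obtain y' where y: "(\<nu> *\<^sub>C 1 - a) * y' = 1" "y' * (\<nu> *\<^sub>C 1 - a) = 1"
    unfolding spectrum_def alg_invertible_def by blast
  have "\<not> alg_invertible (\<mu> *\<^sub>C 1 - a)"
    using \<mu> closed_spectrum[of a] frontier_subset_closed unfolding spectrum_def by blast
  from exists_approx_zero_divisor[OF this y] obtain z
    where z: "norm z = 1" "norm ((\<mu> *\<^sub>C 1 - a) * z) \<le> 2 * cmod (\<mu> - \<nu>)"
    by (auto simp: diff_resolvent_eq norm_scaleC)
  have "(\<mu> *\<^sub>C 1 - a) * z = - (a * z - \<mu> *\<^sub>C z)"
    by (simp add: left_diff_distrib mult_scaleC_left)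
  then have "norm (a * z - \<mu> *\<^sub>C z) \<le> 2 * cmod (\<mu> - \<nu>)"
    using z(2) by (simp only: norm_minus_cancel)
  also have "\<dots> \<le> \<delta>" using \<nu>(1) by (simp add: dist_norm)
  finally show "\<exists>z. norm z = 1 \<and> norm (a * z - \<mu> *\<^sub>C z) \<le> \<delta>"
    using z(1) by blast
qed

lemma segment_meets_approx_eigenvalue:
  fixes a :: "'a::complex_banach_algebra_1"
  assumes "\<zeta> \<in> spectrum a" "\<nu> \<notin> spectrum a"
  shows "\<exists>\<mu>\<in>closed_segment \<zeta> \<nu>. \<mu> \<in> spectrum a \<and> approx_eigenvalue a \<mu>"
proof -
  have "closed_segment \<zeta> \<nu> \<inter> frontier (spectrum a) \<noteq> {}"
    using assms by (intro connected_Int_frontier) auto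
  then show ?thesis
    using frontier_subset_closed[OF closed_spectrum] approx_eigenvalue_if_frontier_spectrum
    by blast
qed

lemma approx_eigenvector_power:
  fixes q z :: "'a::complex_banach_algebra_1"
  assumes z: "norm (q * z - \<beta> *\<^sub>C z) \<le> \<eta>"
    and M: "norm q \<le> M" "cmod \<beta> \<le> M" "1 \<le> M"
  shows "norm (q ^ k * z - \<beta> ^ k *\<^sub>C z) \<le> real k * M ^ k * \<eta>"
proof (induction k)
  case 0
  show ?case by (simp add: scaleC_one)
next
  case (Suc k)
  have "q ^ Suc k * z - \<beta> ^ Suc k *\<^sub>C z
      = q * (q ^ k * z - \<beta> ^ k *\<^sub>C z) + \<beta> ^ k *\<^sub>C (q * z - \<beta> *\<^sub>C z)"
    by (simp add: algebra_simps scaleC_diff_right mult_scaleC_right scaleC_scaleC mult.assoc)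
  also have "norm \<dots> \<le> M * (real k * M ^ k * \<eta>) + M ^ k * \<eta>"
  proof (rule order_trans[OF norm_triangle_ineq add_mono])
    show "norm (q * (q ^ k * z - \<beta> ^ k *\<^sub>C z)) \<le> M * (real k * M ^ k * \<eta>)"
      by (rule order_trans[OF norm_mult_ineq mult_mono]) (use M Suc.IH in auto)
    show "norm (\<beta> ^ k *\<^sub>C (q * z - \<beta> *\<^sub>C z)) \<le> M ^ k * \<eta>"
      unfolding norm_scaleC norm_power using M z by (intro mult_mono power_mono) auto
  qed
  also have "\<dots> \<le> real (Suc k) * M ^ Suc k * \<eta>"
  proof -
    have "0 \<le> \<eta>" using z norm_ge_zero order_trans by blast
    then have "M ^ k * \<eta> \<le> M ^ Suc k * \<eta>"
      using M by (intro mult_right_mono power_increasing) auto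
    then show ?thesis by (simp add: algebra_simps)
  qed
  finally show ?case .
qed

lemma Cpow1_eq_power_diff: "Cpow1 a b n = (a - b) ^ n" for a b :: "'a::comm_ring_1"
proof -
  have "(a - b) ^ n = (- b + a) ^ n" by simp
  also have "\<dots> = (\<Sum>k\<le>n. of_nat (n choose k) * (- b) ^ k * a ^ (n - k))"
    by (rule binomial_ring)
  also have "\<dots> = Cpow1 a b n"
    unfolding Cpow1_def by (rule sum.cong[OF refl]) (simp add: power_minus[of b] mult_ac)
  finally show ?thesis ..
qed

lemma Cpow1_eq_sum_scaleC:
  fixes p q :: "'a::complex_banach_algebra_1"
  shows "Cpow1 p q n
    = (\<Sum>k\<le>n. complex_of_real ((-1) ^ k * real (n choose k)) *\<^sub>C (p ^ (n - k) * q ^ k))"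
  unfolding Cpow1_def
proof (rule sum.cong[OF refl])
  fix k
  have "(-1::'a) ^ k * of_nat (n choose k) = of_real ((-1) ^ k * real (n choose k))"
    by simp
  then show "(-1) ^ k * of_nat (n choose k) * p ^ (n - k) * q ^ k
      = complex_of_real ((-1) ^ k * real (n choose k)) *\<^sub>C (p ^ (n - k) * q ^ k)"
    by (simp only: mult.assoc of_real_mult_eq_scaleC[symmetric])
qed

lemma adj_minus: "adj (- x) = - adj (x::'a::cstar_algebra)"
proof -
  have "adj (0::'a) = 0" using adj_add[of "0::'a" 0] by simp
  then have "adj (- x) + adj x = 0" using adj_add[of "- x" x] by simp
  then show ?thesis by (simp add: eq_neg_iff_add_eq_0)
qed

lemma adj_diff: "adj (x - y) = adj x - adj (y::'a::cstar_algebra)"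
  using adj_add[of x "- y"] adj_minus[of y] by simp

lemma adj_one [simp]: "adj (1::'a::cstar_algebra) = 1"
proof -
  have "adj (1::'a) = adj 1 * adj (adj 1)" by (simp add: adj_adj)
  also have "\<dots> = adj (adj 1 * 1)" by (simp only: adj_mult)
  also have "\<dots> = 1" by (simp add: adj_adj)
  finally show ?thesis .
qed

lemma adj_power: "adj (x ^ n) = adj (x::'a::cstar_algebra) ^ n"
proof (induction n)
  case (Suc n)
  have "adj (x ^ Suc n) = adj (x ^ n * x)" by (simp only: power_Suc2)
  then show ?case by (simp add: adj_mult Suc.IH)
qed simp

lemma norm_adj [simp]: "norm (adj x) = norm (x::'a::cstar_algebra)"
proof -
  have le: "norm y \<le> norm (adj y)" for y :: 'a
  proof (cases "y = 0")
    case False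
    have "(norm y)\<^sup>2 \<le> norm (adj y) * norm y"
      using cstar_identity[of y] norm_mult_ineq[of "adj y" y] by simp
    then show ?thesis using False by (simp add: power2_eq_square)
  qed simp
  show ?thesis using le[of x] le[of "adj x"] by (simp add: adj_adj)
qed

lemma norm_adj_mult_diff_le:
  fixes x x' y y' :: "'a::cstar_algebra"
  shows "norm (adj x * y - adj x' * y') \<le> norm (x - x') * norm y + norm x' * norm (y - y')"
proof -
  have "adj x * y - adj x' * y' = adj (x - x') * y + adj x' * (y - y')"
    by (simp add: adj_diff algebra_simps)
  then have "norm (adj x * y - adj x' * y') \<le> norm (adj (x - x') * y) + norm (adj x' * (y - y'))"
    by (simp only: norm_triangle_ineq)
  also have "\<dots> \<le> norm (x - x') * norm y + norm x' * norm (y - y')"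
    using norm_mult_ineq[of "adj (x - x')" y] norm_mult_ineq[of "adj x'" "y - y'"] by simp
  finally show ?thesis .
qed

lemma adj_sandwich_power_approx:
  fixes a q z :: "'a::cstar_algebra"
  assumes z: "norm z = 1" and a: "norm (a * z - \<mu> *\<^sub>C z) \<le> \<eta>" and q: "norm (q * z - \<nu> *\<^sub>C z) \<le> \<eta>"
    and M: "norm a \<le> M" "norm q \<le> M" "cmod \<mu> \<le> M" "cmod \<nu> \<le> M" "1 \<le> M"
  shows "norm (adj z * (adj a ^ j * q ^ k) * z - (cnj \<mu> ^ j * \<nu> ^ k) *\<^sub>C (adj z * z))
    \<le> real (j + k) * M ^ (j + k) * \<eta>"
proof -
  have "adj z * (adj a ^ j * q ^ k) * z = adj (a ^ j * z) * (q ^ k * z)"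
    by (simp add: adj_mult adj_power mult.assoc)
  moreover have "(cnj \<mu> ^ j * \<nu> ^ k) *\<^sub>C (adj z * z) = adj (\<mu> ^ j *\<^sub>C z) * (\<nu> ^ k *\<^sub>C z)"
    by (simp add: adj_scaleC mult_scaleC_left mult_scaleC_right scaleC_scaleC mult.commute)
  moreover have "norm (q ^ k * z) \<le> M ^ k"
    using norm_mult_ineq[of "q ^ k" z] norm_power_ineq[of q k] power_mono[OF M(2), of k] z
    by simp
  moreover have "norm (\<mu> ^ j *\<^sub>C z) \<le> M ^ j"
    using z M(3) by (simp add: norm_scaleC norm_power power_mono)
  moreover have "0 \<le> \<eta>" using a norm_ge_zero order_trans by blast
  ultimately have "norm (adj z * (adj a ^ j * q ^ k) * z - (cnj \<mu> ^ j * \<nu> ^ k) *\<^sub>C (adj z * z))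
      \<le> norm (a ^ j * z - \<mu> ^ j *\<^sub>C z) * norm (q ^ k * z)
        + norm (\<mu> ^ j *\<^sub>C z) * norm (q ^ k * z - \<nu> ^ k *\<^sub>C z)"
    using norm_adj_mult_diff_le by metis
  also have "\<dots> \<le> (real j * M ^ j * \<eta>) * M ^ k + M ^ j * (real k * M ^ k * \<eta>)"
    using approx_eigenvector_power[OF a M(1,3,5), of j] approx_eigenvector_power[OF q M(2,4,5), of k]
      \<open>norm (q ^ k * z) \<le> M ^ k\<close> \<open>norm (\<mu> ^ j *\<^sub>C z) \<le> M ^ j\<close> \<open>0 \<le> \<eta>\<close> M(5)
    by (intro add_mono mult_mono) auto
  also have "\<dots> = real (j + k) * M ^ (j + k) * \<eta>"
    by (simp add: power_add algebra_simps)
  finally show ?thesis .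
qed

lemma adj_sandwich_Cpow1_approx:
  fixes a q z :: "'a::cstar_algebra"
  assumes z: "norm z = 1" and a: "norm (a * z - \<mu> *\<^sub>C z) \<le> \<eta>" and q: "norm (q * z - \<nu> *\<^sub>C z) \<le> \<eta>"
    and M: "norm a \<le> M" "norm q \<le> M" "cmod \<mu> \<le> M" "cmod \<nu> \<le> M" "1 \<le> M"
  shows "norm (adj z * Cpow1 (adj a) q n * z - (cnj \<mu> - \<nu>) ^ n *\<^sub>C (adj z * z))
    \<le> 2 ^ n * (real n * M ^ n * \<eta>)"
proof -
  define c where "c k = complex_of_real ((-1) ^ k * real (n choose k))" for k
  define d where "d k = adj z * (adj a ^ (n - k) * q ^ k) * z
    - (cnj \<mu> ^ (n - k) * \<nu> ^ k) *\<^sub>C (adj z * z)" for k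
  have "adj z * Cpow1 (adj a) q n * z = (\<Sum>k\<le>n. c k *\<^sub>C (adj z * (adj a ^ (n - k) * q ^ k) * z))"
    unfolding Cpow1_eq_sum_scaleC c_def
    by (simp add: sum_distrib_left sum_distrib_right mult_scaleC_left mult_scaleC_right)
  moreover have "(cnj \<mu> - \<nu>) ^ n = (\<Sum>k\<le>n. c k * (cnj \<mu> ^ (n - k) * \<nu> ^ k))"
    unfolding Cpow1_eq_power_diff[symmetric] Cpow1_def c_def by (simp add: mult.assoc)
  then have "(cnj \<mu> - \<nu>) ^ n *\<^sub>C (adj z * z)
      = (\<Sum>k\<le>n. c k *\<^sub>C ((cnj \<mu> ^ (n - k) * \<nu> ^ k) *\<^sub>C (adj z * z)))"
    by (simp only: scaleC_sum_left scaleC_scaleC)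
  ultimately have "adj z * Cpow1 (adj a) q n * z - (cnj \<mu> - \<nu>) ^ n *\<^sub>C (adj z * z)
      = (\<Sum>k\<le>n. c k *\<^sub>C d k)"
    by (simp add: d_def sum_subtractf scaleC_diff_right)
  also have "norm \<dots> \<le> (\<Sum>k\<le>n. real (n choose k) * (real n * M ^ n * \<eta>))"
  proof (rule order_trans[OF norm_sum sum_mono])
    fix k assume "k \<in> {..n}"
    then have "norm (d k) \<le> real n * M ^ n * \<eta>"
      using adj_sandwich_power_approx[OF z a q M, of "n - k" k] by (simp add: d_def)
    moreover have "cmod (c k) = real (n choose k)"
      unfolding c_def norm_of_real by (simp add: abs_mult power_abs)
    ultimately show "norm (c k *\<^sub>C d k) \<le> real (n choose k) * (real n * M ^ n * \<eta>)"
      by (simp add: norm_scaleC mult_left_mono)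
  qed
  also have "\<dots> = 2 ^ n * (real n * M ^ n * \<eta>)"
    by (simp add: sum_distrib_right[symmetric] of_nat_sum[symmetric] choose_row_sum)
  finally show ?thesis .
qed

lemma cmod_cnj_diff_power_le_norm_Cpow1:
  fixes a q :: "'a::cstar_algebra"
  assumes \<mu>: "approx_eigenvalue a \<mu>"
    and transfer: "\<And>z. norm (q * z - \<nu> *\<^sub>C z) \<le> K * norm (a * z - \<mu> *\<^sub>C z)"
  shows "cmod (cnj \<mu> - \<nu>) ^ n \<le> norm (Cpow1 (adj a) q n)"
proof (rule field_le_epsilon)
  fix e :: real assume "0 < e"
  define M where "M = norm a + norm q + cmod \<mu> + cmod \<nu> + 1"
  define B where "B = 2 ^ n * (real n * M ^ n)"
  define \<eta> where "\<eta> = e / (B + 1)"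
  have "0 \<le> B" by (simp add: B_def M_def)
  then have "0 < \<eta>" "B * \<eta> \<le> e" using \<open>0 < e\<close> by (simp_all add: \<eta>_def field_simps)
  then obtain z where z: "norm z = 1" "norm (a * z - \<mu> *\<^sub>C z) \<le> \<eta> / (1 + \<bar>K\<bar>)"
    using \<mu> unfolding approx_eigenvalue_def by (meson divide_pos_pos abs_ge_zero add_pos_nonneg zero_less_one)
  have "\<eta> / (1 + \<bar>K\<bar>) \<le> \<eta>" "\<bar>K\<bar> * (\<eta> / (1 + \<bar>K\<bar>)) \<le> \<eta>"
    using \<open>0 < \<eta>\<close> by (simp_all add: field_simps)
  then have "norm (a * z - \<mu> *\<^sub>C z) \<le> \<eta>" "norm (q * z - \<nu> *\<^sub>C z) \<le> \<eta>"
    using z(2) transfer[of z]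
    by (meson abs_ge_self abs_ge_zero mult_left_mono mult_right_mono norm_ge_zero order_trans)+
  from adj_sandwich_Cpow1_approx[OF z(1) this, of M n]
  have est: "norm (adj z * Cpow1 (adj a) q n * z - (cnj \<mu> - \<nu>) ^ n *\<^sub>C (adj z * z)) \<le> B * \<eta>"
    by (simp add: B_def M_def)
  have "norm (adj z * z) = 1" using cstar_identity[of z] z(1) by simp
  then have "cmod (cnj \<mu> - \<nu>) ^ n = norm ((cnj \<mu> - \<nu>) ^ n *\<^sub>C (adj z * z))"
    by (simp add: norm_scaleC norm_power)
  also have "\<dots> \<le> norm (adj z * Cpow1 (adj a) q n * z) + B * \<eta>"
    using norm_triangle_ineq3[of "adj z * Cpow1 (adj a) q n * z" "(cnj \<mu> - \<nu>) ^ n *\<^sub>C (adj z * z)"]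
      est by (simp add: norm_minus_commute)
  also have "norm (adj z * Cpow1 (adj a) q n * z) \<le> norm (Cpow1 (adj a) q n)"
    using norm_mult_ineq[of "adj z * Cpow1 (adj a) q n" z] norm_mult_ineq[of "adj z" "Cpow1 (adj a) q n"] z(1)
    by simp
  finally show "cmod (cnj \<mu> - \<nu>) ^ n \<le> norm (Cpow1 (adj a) q n) + e"
    using \<open>B * \<eta> \<le> e\<close> by simp
qed

lemma ereal_le_rho:
  fixes x y :: "'a::real_normed_algebra_1"
  assumes c: "0 \<le> c" and le: "\<And>n. c ^ n \<le> norm (Cpow1 x y n)"
  shows "ereal c \<le> rho x y"
  unfolding rho_def
proof (rule le_Limsup[OF trivial_limit_sequentially eventually_sequentiallyI])
  fix n :: nat assume "1 \<le> n"
  then have "c = root n (c ^ n)" using c by (simp add: real_root_power_cancel)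
  also have "\<dots> \<le> root n (norm (Cpow1 x y n))" using \<open>1 \<le> n\<close> le by (simp add: real_root_le_mono)
  finally show "ereal c \<le> ereal (root n (norm (Cpow1 x y n)))" by simp
qed

lemma cmod_cnj_diff_le_rho:
  fixes a q :: "'a::cstar_algebra"
  assumes "approx_eigenvalue a \<mu>"
    and "\<And>z. norm (q * z - \<nu> *\<^sub>C z) \<le> K * norm (a * z - \<mu> *\<^sub>C z)"
  shows "ereal (cmod (cnj \<mu> - \<nu>)) \<le> rho (adj a) q"
  using cmod_cnj_diff_power_le_norm_Cpow1[OF assms] by (intro ereal_le_rho) auto

lemma approx_eigenvalue_real_if_rho_adj_self_zero:
  fixes a :: "'a::cstar_algebra"
  assumes "rho (adj a) a = 0" and "approx_eigenvalue a \<mu>"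
  shows "\<mu> \<in> \<real>"
proof -
  have "ereal (cmod (cnj \<mu> - \<mu>)) \<le> 0"
    using cmod_cnj_diff_le_rho[OF assms(2), of a \<mu> 1] assms(1) by simp
  then show ?thesis by (simp add: Reals_cnj_iff)
qed

lemma approx_eigenvector_inverse:
  fixes a b z :: "'a::complex_banach_algebra_1"
  assumes ab: "a * b = 1" "b * a = 1" and "\<mu> \<noteq> 0"
  shows "norm (b * z - inverse \<mu> *\<^sub>C z) \<le> cmod (inverse \<mu>) * norm b * norm (a * z - \<mu> *\<^sub>C z)"
proof -
  have "b * z - inverse \<mu> *\<^sub>C z = - (inverse \<mu> *\<^sub>C (b * (a * z - \<mu> *\<^sub>C z)))"
    using \<open>\<mu> \<noteq> 0\<close>
    by (simp add: right_diff_distrib mult.assoc[symmetric] ab mult_scaleC_right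
        scaleC_diff_right scaleC_scaleC scaleC_one)
  then show ?thesis
    using norm_mult_ineq[of b "a * z - \<mu> *\<^sub>C z"]
    by (simp add: norm_scaleC mult.assoc mult_left_mono)
qed

lemma approx_eigenvalue_unimodular_if_rho_adj_inverse_zero:
  fixes a b :: "'a::cstar_algebra"
  assumes ab: "a * b = 1" "b * a = 1" and "rho (adj a) b = 0"
    and "approx_eigenvalue a \<mu>" and "\<mu> \<noteq> 0"
  shows "cmod \<mu> = 1"
proof -
  have "ereal (cmod (cnj \<mu> - inverse \<mu>)) \<le> 0"
    using cmod_cnj_diff_le_rho[OF assms(4) approx_eigenvector_inverse[OF ab assms(5)]] assms(3)
    by simp
  then have "\<mu> * cnj \<mu> = 1" using \<open>\<mu> \<noteq> 0\<close> by simp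
  then have "(cmod \<mu>)\<^sup>2 = 1" by (metis complex_norm_square of_real_eq_1_iff)
  then show ?thesis using norm_ge_zero[of \<mu>] by (auto simp: power2_eq_1_iff)
qed

lemma spectrum_subset_Reals_if_rho_adj_self_zero:
  fixes a :: "'a::cstar_algebra"
  assumes rho: "rho (adj a) a = 0"
  shows "spectrum a \<subseteq> \<real>"
proof
  fix \<zeta> assume \<zeta>: "\<zeta> \<in> spectrum a"
  show "\<zeta> \<in> \<real>"
  proof (rule ccontr)
    assume "\<zeta> \<notin> \<real>"
    then have Im: "Im \<zeta> \<noteq> 0" by (simp add: complex_is_Real_iff)
    define R where "R = (norm a + 1) / \<bar>Im \<zeta>\<bar>"
    define \<nu> where "\<nu> = Complex (Re \<zeta>) (R * Im \<zeta>)"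
    have "0 < R" using Im by (auto simp: R_def intro!: divide_pos_pos add_nonneg_pos)
    have "norm a < \<bar>Im \<nu>\<bar>" using Im by (simp add: \<nu>_def R_def abs_mult)
    then have "\<nu> \<notin> spectrum a"
      using abs_Im_le_cmod[of \<nu>] cmod_le_norm_if_in_spectrum by fastforce
    then obtain \<mu> where \<mu>: "\<mu> \<in> closed_segment \<zeta> \<nu>" "approx_eigenvalue a \<mu>"
      using segment_meets_approx_eigenvalue[OF \<zeta>] by blast
    then obtain u where u: "0 \<le> u" "u \<le> 1" "\<mu> = (1 - u) *\<^sub>R \<zeta> + u *\<^sub>R \<nu>"
      by (auto simp: in_segment)
    have "Im \<mu> = ((1 - u) + u * R) * Im \<zeta>" by (simp add: u \<nu>_def algebra_simps)
    moreover have "0 < (1 - u) + u * R"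
      using u \<open>0 < R\<close> by (cases "u = 1") (auto intro: add_pos_nonneg)
    ultimately have "\<mu> \<notin> \<real>" using Im by (simp add: complex_is_Real_iff)
    then show False using approx_eigenvalue_real_if_rho_adj_self_zero[OF rho \<mu>(2)] by simp
  qed
qed

lemma spectrum_subset_unit_circle_if_rho_adj_inverse_zero:
  fixes a b :: "'a::cstar_algebra"
  assumes ab: "a * b = 1" "b * a = 1" and rho: "rho (adj a) b = 0"
  shows "spectrum a \<subseteq> {z. cmod z = 1}"
proof
  fix \<zeta> assume \<zeta>: "\<zeta> \<in> spectrum a"
  have "0 \<notin> spectrum a" using ab by (intro zero_notin_spectrum alg_invertibleI)
  show "\<zeta> \<in> {z. cmod z = 1}"
  proof (rule ccontr)
    assume "\<zeta> \<notin> {z. cmod z = 1}"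
    then have ne: "cmod \<zeta> \<noteq> 1" by simp
    \<comment> \<open>Run radially to 0 or beyond the spectral bound, staying on the side of the circle of \<zeta>.\<close>
    define R where "R = (if cmod \<zeta> < 1 then 0 else norm a + 1)"
    have "complex_of_real R * \<zeta> \<notin> spectrum a"
    proof (cases "cmod \<zeta> < 1")
      case False
      then have "1 < cmod \<zeta>" using ne by simp
      then have "norm a * 1 \<le> norm a * cmod \<zeta>" by (intro mult_left_mono) auto
      then have "norm a < R * cmod \<zeta>" using \<open>1 < cmod \<zeta>\<close> False by (simp add: R_def algebra_simps)
      then show ?thesis using cmod_le_norm_if_in_spectrum by (fastforce simp: norm_mult R_def)
    qed (use \<open>0 \<notin> spectrum a\<close> in \<open>simp add: R_def\<close>)
    then obtain \<mu> where \<mu>: "\<mu> \<in> closed_segment \<zeta> (complex_of_real R * \<zeta>)"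
      "\<mu> \<in> spectrum a" "approx_eigenvalue a \<mu>"
      using segment_meets_approx_eigenvalue[OF \<zeta>] by blast
    then obtain u where u: "0 \<le> u" "u \<le> 1" "\<mu> = (1 - u) *\<^sub>R \<zeta> + u *\<^sub>R (complex_of_real R * \<zeta>)"
      by (auto simp: in_segment)
    define s where "s = (1 - u) + u * R"
    have "\<mu> = complex_of_real s * \<zeta>"
      using u(3) by (simp add: s_def scaleR_conv_of_real algebra_simps)
    then have "cmod \<mu> = \<bar>s\<bar> * cmod \<zeta>" by (simp only: norm_mult norm_of_real)
    moreover have "0 \<le> s" using u(1,2) by (simp add: s_def R_def)
    ultimately have cmod_\<mu>: "cmod \<mu> = s * cmod \<zeta>" by simp
    have "cmod \<mu> \<noteq> 1"
    proof (cases "cmod \<zeta> < 1")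
      case True
      then have "s \<le> 1" using u(1) by (simp add: s_def R_def)
      then show ?thesis using cmod_\<mu> True \<open>0 \<le> s\<close> mult_left_le_one_le[of "cmod \<zeta>" s] by simp
    next
      case False
      then have "1 < cmod \<zeta>" "1 \<le> R" using ne by (simp_all add: R_def)
      then have "1 \<le> s" using mult_left_mono[of 1 R u] u(1) by (simp add: s_def)
      then show ?thesis using cmod_\<mu> \<open>1 < cmod \<zeta>\<close> mult_right_mono[of 1 s "cmod \<zeta>"] by simp
    qed
    moreover have "\<mu> \<noteq> 0" using \<mu>(2) \<open>0 \<notin> spectrum a\<close> by blast
    ultimately show False
      using approx_eigenvalue_unimodular_if_rho_adj_inverse_zero[OF ab rho \<mu>(3)] by blast
  qed
qed

theorem theorem3p5:
  fixes a :: "'a::cstar_algebra"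
  shows "(rho (adj a) a = 0 \<longrightarrow> spectrum a \<subseteq> \<real>)
       \<and> (alg_invertible a \<and> rho (adj a) (alg_inv a) = 0
            \<longrightarrow> spectrum a \<subseteq> {z. cmod z = 1})"
  using spectrum_subset_Reals_if_rho_adj_self_zero[of a] alg_inv[of a]
    spectrum_subset_unit_circle_if_rho_adj_inverse_zero[of a "alg_inv a"]
  by blast

end
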